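(* Let $\mathscr H$ be a complex Hilbert space and $\mathbf{X},\mathbf{Y},\mathbf{Z},\mathbf{W}\in\mathbb{B}(\mathscr H)^d$. Then $$w_e\left(\begin{bmatrix}\mathbf{X}&\mathbf{Y}\\\mathbf{Z}&\mathbf{W}\end{bmatrix}\right)\le w\left(\begin{bmatrix}w_e(\mathbf{X})&\|\mathbf{Y}\|\\\|\mathbf{Z}\|&w_e(\mathbf{W})\end{bmatrix}\right),$$ where on the right $w$ is the numerical radius of a $2\times2$ complex matrix.
   Context: $\mathbb{B}(\mathscr H)$ denotes the bounded linear operators on $\mathscr H$. For $\mathbf{T}=(T_1,\dots,T_d)$: $w_e(\mathbf{T})=\sup\{(\sum_{k}|\langle T_kx,x\rangle|^2)^{1/2}: \|x\|=1\}$ and $\|\mathbf{T}\|=\sup\{(\sum_k\|T_kx\|^2)^{1/2}: \|x\|=1\}$. For a matrix $A$, $w(A)=\sup\{|\langle Av,v\rangle|:\|v\|=1\}$. For $d$-tuples $\mathbf{X},\mathbf{Y},\mathbf{Z},\mathbf{W}$, $\begin{bmatrix}\mathbf{X}&\mathbf{Y}\\\mathbf{Z}&\mathbf{W}\end{bmatrix}$ denotes the $d$-tuple $\left(\begin{bmatrix}X_k&Y_k\\Z_k&W_k\end{bmatrix}\right)_{k=1}^d$ of operators on $\mathscr H\oplus\mathscr H$. *)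

theory Defs
  imports "HOL-Analysis.Analysis"
begin

text \<open>HOL has no complex vector spaces, so we introduce complex Hilbert spaces as a type class:
a real Banach space carrying a complex scalar multiplication extending the real one and a
complex inner product (conjugate-linear in the first argument, linear in the second) whose
induced norm is the given norm.\<close>

class complex_hilbert = banach +
  fixes scaleC :: "complex \<Rightarrow> 'a \<Rightarrow> 'a"
    and cinner :: "'a \<Rightarrow> 'a \<Rightarrow> complex"
  assumes scaleC_add_right: "scaleC c (x + y) = scaleC c x + scaleC c y"
    and scaleC_add_left: "scaleC (c + d) x = scaleC c x + scaleC d x"
    and scaleC_scaleC: "scaleC c (scaleC d x) = scaleC (c * d) x"
    and scaleC_one: "scaleC 1 x = x"
    and scaleC_of_real: "scaleC (complex_of_real r) x = scaleR r x"
    and cinner_commute: "cinner x y = cnj (cinner y x)"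
    and cinner_add_left: "cinner (x + y) z = cinner x z + cinner y z"
    and cinner_scaleC_left: "cinner (scaleC c x) y = cnj c * cinner x y"
    and cinner_norm: "cinner x x = complex_of_real ((norm x)\<^sup>2)"

text \<open>The Hilbert direct sum \<open>H \<oplus> H\<close> (more generally \<open>H \<oplus> K\<close>), realised on the product type,
whose norm in HOL-Analysis is already \<open>sqrt (norm x^2 + norm y^2)\<close>.\<close>

instantiation prod :: (complex_hilbert, complex_hilbert) complex_hilbert
begin

definition scaleC_prod_def: "scaleC c p = (scaleC c (fst p), scaleC c (snd p))"
definition cinner_prod_def: "cinner p q = cinner (fst p) (fst q) + cinner (snd p) (snd q)"

instance
proof
  fix c d :: complex and x y z :: "'a \<times> 'b" and r :: real
  show "scaleC c (x + y) = scaleC c x + scaleC c y"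
    by (simp add: scaleC_prod_def scaleC_add_right)
  show "scaleC (c + d) x = scaleC c x + scaleC d x"
    by (simp add: scaleC_prod_def scaleC_add_left)
  show "scaleC c (scaleC d x) = scaleC (c * d) x"
    by (simp add: scaleC_prod_def scaleC_scaleC)
  show "scaleC 1 x = x"
    by (simp add: scaleC_prod_def scaleC_one)
  show "scaleC (complex_of_real r) x = scaleR r x"
    by (simp add: scaleC_prod_def scaleC_of_real scaleR_prod_def)
  show "cinner x y = cnj (cinner y x)"
    by (simp add: cinner_prod_def cinner_commute[of "fst x"] cinner_commute[of "snd x"])
  show "cinner (x + y) z = cinner x z + cinner y z"
    by (simp add: cinner_prod_def cinner_add_left)
  show "cinner (scaleC c x) y = cnj c * cinner x y"
    by (simp add: cinner_prod_def scaleC_prod_def cinner_scaleC_left distrib_left)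
  show "cinner x x = complex_of_real ((norm x)\<^sup>2)"
    by (simp add: cinner_prod_def cinner_norm norm_prod_def)
qed

end

definition bounded_op :: "('a::complex_hilbert \<Rightarrow> 'a) \<Rightarrow> bool" where
  "bounded_op T \<longleftrightarrow>
     (\<forall>x y. T (x + y) = T x + T y) \<and>
     (\<forall>c x. T (scaleC c x) = scaleC c (T x)) \<and>
     (\<exists>K. \<forall>x. norm (T x) \<le> norm x * K)"

definition block_op ::
  "('a::complex_hilbert \<Rightarrow> 'a) \<Rightarrow> ('a \<Rightarrow> 'a) \<Rightarrow> ('a \<Rightarrow> 'a) \<Rightarrow> ('a \<Rightarrow> 'a)
     \<Rightarrow> ('a \<times> 'a \<Rightarrow> 'a \<times> 'a)" where
  "block_op X Y Z W = (\<lambda>p. (X (fst p) + Y (snd p), Z (fst p) + W (snd p)))"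

definition block_tuple ::
  "('d \<Rightarrow> 'a::complex_hilbert \<Rightarrow> 'a) \<Rightarrow> ('d \<Rightarrow> 'a \<Rightarrow> 'a) \<Rightarrow> ('d \<Rightarrow> 'a \<Rightarrow> 'a)
     \<Rightarrow> ('d \<Rightarrow> 'a \<Rightarrow> 'a) \<Rightarrow> ('d \<Rightarrow> 'a \<times> 'a \<Rightarrow> 'a \<times> 'a)" where
  "block_tuple X Y Z W = (\<lambda>k. block_op (X k) (Y k) (Z k) (W k))"

text \<open>Suprema over the unit sphere; \<open>0\<close> is inserted so that the value is \<open>0\<close> on the trivial space
(for a nontrivial space this does not change the supremum, all quantities being nonnegative).\<close>

definition euclid_radius :: "('d::finite \<Rightarrow> 'a::complex_hilbert \<Rightarrow> 'a) \<Rightarrow> real" where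
  "euclid_radius T =
     Sup (insert 0 {sqrt (\<Sum>k\<in>UNIV. (cmod (cinner (T k x) x))\<^sup>2) | x. norm x = 1})"

definition tuple_norm :: "('d::finite \<Rightarrow> 'a::complex_hilbert \<Rightarrow> 'a) \<Rightarrow> real" where
  "tuple_norm T =
     Sup (insert 0 {sqrt (\<Sum>k\<in>UNIV. (norm (T k x))\<^sup>2) | x. norm x = 1})"

definition num_radius :: "complex^'n^'n \<Rightarrow> real" where
  "num_radius A = Sup {cmod (\<Sum>i\<in>UNIV. cnj (v $ i) * ((A *v v) $ i)) | v :: complex^'n. norm v = 1}"

definition mat2 :: "complex \<Rightarrow> complex \<Rightarrow> complex \<Rightarrow> complex \<Rightarrow> complex^2^2" where
  "mat2 a b c d = (\<chi> i j. if i = 1 then (if j = 1 then a else b) else (if j = 1 then c else d))"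

end

theory Submission
  imports Defs
begin

text \<open>For a unit vector \<open>(x\<^sub>1, x\<^sub>2)\<close> of \<open>H \<oplus> H\<close> the \<open>k\<close>-th entry of the block tuple has
  \<open>\<langle>T\<^sub>k(x\<^sub>1,x\<^sub>2),(x\<^sub>1,x\<^sub>2)\<rangle> = \<langle>X\<^sub>kx\<^sub>1,x\<^sub>1\<rangle> + \<langle>Y\<^sub>kx\<^sub>2,x\<^sub>1\<rangle> + \<langle>Z\<^sub>kx\<^sub>1,x\<^sub>2\<rangle> + \<langle>W\<^sub>kx\<^sub>2,x\<^sub>2\<rangle>\<close>.
  Minkowski's inequality in \<open>\<ell>\<^sup>2\<close> over \<open>k\<close>, the homogeneity of \<open>w\<^sub>e\<close> and Cauchy--Schwarz for the
  off-diagonal terms bound the \<open>\<ell>\<^sup>2\<close>-norm of these numbers by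
  \<open>w\<^sub>e(X) t\<^sub>1\<^sup>2 + (\<parallel>Y\<parallel> + \<parallel>Z\<parallel>) t\<^sub>1 t\<^sub>2 + w\<^sub>e(W) t\<^sub>2\<^sup>2\<close> with \<open>t\<^sub>i = \<parallel>x\<^sub>i\<parallel>\<close>, which is the quadratic form of
  the \<open>2\<times>2\<close> matrix at the real unit vector \<open>(t\<^sub>1, t\<^sub>2)\<close> and hence at most its numerical radius.\<close>

context complex_hilbert
begin

lemma cinner_zero_left [simp]: "cinner 0 y = 0"
  using cinner_add_left[of 0 0 y] by simp

lemma cinner_add_right: "cinner x (y + z) = cinner x y + cinner x z"
  using cinner_commute[of x "y + z"] cinner_add_left[of y z x]
    cinner_commute[of y x] cinner_commute[of z x]
  by simp

lemma cinner_scaleC_right: "cinner x (scaleC c y) = c * cinner x y"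
  using cinner_commute[of x "scaleC c y"] cinner_scaleC_left[of c y x] cinner_commute[of y x]
  by simp

lemma cinner_scaleR_left: "cinner (scaleR r x) y = of_real r * cinner x y"
  using cinner_scaleC_left[of "of_real r" x y] scaleC_of_real[of r x] by simp

lemma cinner_scaleR_right: "cinner x (scaleR r y) = of_real r * cinner x y"
  using cinner_scaleC_right[of x "of_real r" y] scaleC_of_real[of r y] by simp

lemma power2_norm_eq_Re_cinner: "(norm x)\<^sup>2 = Re (cinner x x)"
  using cinner_norm[of x] by simp

lemma norm_scaleC_unimodular:
  assumes "cmod c = 1"
  shows "norm (scaleC c y) = norm y"
proof -
  have "cnj c * c = 1"
    using assms by (metis complex_norm_square mult.commute of_real_1 power_one)
  moreover have "cinner (scaleC c y) (scaleC c y) = (cnj c * c) * cinner y y"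
    by (simp add: cinner_scaleC_left cinner_scaleC_right mult.assoc)
  ultimately have "(norm (scaleC c y))\<^sup>2 = (norm y)\<^sup>2"
    by (simp add: power2_norm_eq_Re_cinner)
  then show ?thesis
    by (simp add: power2_eq_iff_nonneg)
qed

lemma Re_cinner_le_norm: "Re (cinner a b) \<le> norm a * norm b"
proof -
  have "(norm (a + b))\<^sup>2 = (norm a)\<^sup>2 + (norm b)\<^sup>2 + 2 * Re (cinner a b)"
    unfolding power2_norm_eq_Re_cinner
    by (simp add: cinner_add_left cinner_add_right cinner_commute[of b a])
  moreover have "(norm (a + b))\<^sup>2 \<le> (norm a + norm b)\<^sup>2"
    by (simp add: norm_triangle_ineq power_mono)
  ultimately show ?thesis
    by (simp add: power2_sum)
qed

text \<open>Cauchy--Schwarz: rotate \<open>a\<close> by a unimodular scalar so that the inner product becomes real.\<close>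
lemma norm_cinner_le: "cmod (cinner a b) \<le> norm a * norm b"
proof (cases "cinner a b = 0")
  case True
  then show ?thesis by simp
next
  case False
  define c where "c = sgn (cinner a b)"
  have unimodular: "cmod c = 1"
    using False by (simp add: c_def norm_sgn)
  have "cnj c * cinner a b = (cnj (cinner a b) * cinner a b) / of_real (cmod (cinner a b))"
    by (simp add: c_def sgn_eq divide_inverse)
  also have "\<dots> = of_real (cmod (cinner a b)) ^ 2 / of_real (cmod (cinner a b))"
    using complex_norm_square[of "cinner a b"] by (simp add: mult.commute)
  also have "\<dots> = of_real (cmod (cinner a b))"
    using False by (simp add: power2_eq_square)
  finally have "cnj c * cinner a b = of_real (cmod (cinner a b))" .
  then have "cmod (cinner a b) = Re (cinner (scaleC c a) b)"
    by (simp add: cinner_scaleC_left)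
  also have "\<dots> \<le> norm a * norm b"
    using Re_cinner_le_norm[of "scaleC c a" b] norm_scaleC_unimodular[OF unimodular] by simp
  finally show ?thesis .
qed

end

lemma bounded_op_scaleR: "bounded_op T \<Longrightarrow> T (scaleR r x) = scaleR r (T x)"
  unfolding bounded_op_def by (metis scaleC_of_real)

lemma bounded_op_zero: "bounded_op T \<Longrightarrow> T 0 = 0"
  unfolding bounded_op_def by (metis add_cancel_right_right add_0)

lemma L2_set_norm_add_le:
  fixes f g :: "'i \<Rightarrow> 'a::real_normed_vector"
  shows "L2_set (\<lambda>k. norm (f k + g k)) A \<le> L2_set (\<lambda>k. norm (f k)) A + L2_set (\<lambda>k. norm (g k)) A"
proof -
  have "L2_set (\<lambda>k. norm (f k + g k)) A \<le> L2_set (\<lambda>k. norm (f k) + norm (g k)) A"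
    by (rule L2_set_mono) (simp_all add: norm_triangle_ineq)
  also have "\<dots> \<le> L2_set (\<lambda>k. norm (f k)) A + L2_set (\<lambda>k. norm (g k)) A"
    by (rule L2_set_triangle_ineq)
  finally show ?thesis .
qed

lemma bdd_above_tuple_sets:
  fixes T :: "'d::finite \<Rightarrow> 'a::complex_hilbert \<Rightarrow> 'a"
  assumes "\<forall>k. bounded_op (T k)"
  shows bdd_above_euclid_radius_set:
      "bdd_above (insert 0 {sqrt (\<Sum>k\<in>UNIV. (cmod (cinner (T k x) x))\<^sup>2) | x. norm x = 1})"
    and bdd_above_tuple_norm_set:
      "bdd_above (insert 0 {sqrt (\<Sum>k\<in>UNIV. (norm (T k x))\<^sup>2) | x. norm x = 1})"
proof -
  obtain K where K: "\<And>k x. norm (T k x) \<le> norm x * K k"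
    using assms unfolding bounded_op_def by metis
  have "L2_set (\<lambda>k. cmod (cinner (T k x) x)) UNIV \<le> L2_set K UNIV"
    and "L2_set (\<lambda>k. norm (T k x)) UNIV \<le> L2_set K UNIV" if "norm x = 1" for x
    using that norm_cinner_le[of "T _ x" x] K[of _ x]
    by (auto intro!: L2_set_mono intro: order_trans)
  then show "bdd_above (insert 0 {sqrt (\<Sum>k\<in>UNIV. (cmod (cinner (T k x) x))\<^sup>2) | x. norm x = 1})"
    and "bdd_above (insert 0 {sqrt (\<Sum>k\<in>UNIV. (norm (T k x))\<^sup>2) | x. norm x = 1})"
    by (auto intro!: bdd_aboveI[where M = "L2_set K UNIV"] simp: L2_set_def)
qed

lemma euclid_radius_nonneg: "\<forall>k. bounded_op (T k) \<Longrightarrow> 0 \<le> euclid_radius T"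
  unfolding euclid_radius_def by (rule cSup_upper[OF _ bdd_above_euclid_radius_set]) auto

lemma tuple_norm_nonneg: "\<forall>k. bounded_op (T k) \<Longrightarrow> 0 \<le> tuple_norm T"
  unfolding tuple_norm_def by (rule cSup_upper[OF _ bdd_above_tuple_norm_set]) auto

lemma euclid_radius_le:
  assumes "0 \<le> R" and "\<And>x. norm x = 1 \<Longrightarrow> L2_set (\<lambda>k. cmod (cinner (T k x) x)) UNIV \<le> R"
  shows "euclid_radius T \<le> R"
  unfolding euclid_radius_def using assms by (auto intro!: cSup_least simp: L2_set_def)

lemma L2_set_cinner_le_euclid_radius:
  fixes T :: "'d::finite \<Rightarrow> 'a::complex_hilbert \<Rightarrow> 'a"
  assumes T: "\<forall>k. bounded_op (T k)"
  shows "L2_set (\<lambda>k. cmod (cinner (T k x) x)) UNIV \<le> euclid_radius T * (norm x)\<^sup>2"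
proof (cases "x = 0")
  case True
  then show ?thesis
    using T by (simp add: bounded_op_zero euclid_radius_nonneg L2_set_def)
next
  case False
  define n where "n = norm x"
  have n: "n > 0"
    using False by (simp add: n_def)
  define u where "u = scaleR (1 / n) x"
  have "cmod (cinner (T k u) u) = (1 / n)\<^sup>2 * cmod (cinner (T k x) x)" for k
    using T n by (simp add: u_def bounded_op_scaleR cinner_scaleR_left cinner_scaleR_right
        norm_mult norm_divide power2_eq_square)
  then have "(1 / n)\<^sup>2 * L2_set (\<lambda>k. cmod (cinner (T k x) x)) UNIV
      = L2_set (\<lambda>k. cmod (cinner (T k u) u)) UNIV"
    by (simp add: L2_set_right_distrib)
  also have "\<dots> \<le> euclid_radius T"
    unfolding euclid_radius_def L2_set_def
    using n by (intro cSup_upper[OF _ bdd_above_euclid_radius_set[OF T]]) (auto simp: u_def n_def)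
  finally show ?thesis
    using n by (simp add: n_def power_divide field_simps)
qed

lemma L2_set_norm_le_tuple_norm:
  fixes T :: "'d::finite \<Rightarrow> 'a::complex_hilbert \<Rightarrow> 'a"
  assumes T: "\<forall>k. bounded_op (T k)"
  shows "L2_set (\<lambda>k. norm (T k x)) UNIV \<le> tuple_norm T * norm x"
proof (cases "x = 0")
  case True
  then show ?thesis
    using T by (simp add: bounded_op_zero tuple_norm_nonneg L2_set_def)
next
  case False
  define n where "n = norm x"
  have n: "n > 0"
    using False by (simp add: n_def)
  define u where "u = scaleR (1 / n) x"
  have "norm (T k u) = 1 / n * norm (T k x)" for k
    using T n by (simp add: u_def bounded_op_scaleR)
  then have "1 / n * L2_set (\<lambda>k. norm (T k x)) UNIV = L2_set (\<lambda>k. norm (T k u)) UNIV"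
    using n L2_set_right_distrib[of "1 / n" "\<lambda>k. norm (T k x)" UNIV] by simp
  also have "\<dots> \<le> tuple_norm T"
    unfolding tuple_norm_def L2_set_def
    using n by (intro cSup_upper[OF _ bdd_above_tuple_norm_set[OF T]]) (auto simp: u_def n_def)
  finally show ?thesis
    using n by (simp add: n_def field_simps)
qed

lemma L2_set_cinner_le_tuple_norm:
  fixes T :: "'d::finite \<Rightarrow> 'a::complex_hilbert \<Rightarrow> 'a"
  assumes "\<forall>k. bounded_op (T k)"
  shows "L2_set (\<lambda>k. cmod (cinner (T k y) x)) UNIV \<le> tuple_norm T * norm x * norm y"
proof -
  have "L2_set (\<lambda>k. cmod (cinner (T k y) x)) UNIV \<le> L2_set (\<lambda>k. norm (T k y) * norm x) UNIV"
    by (rule L2_set_mono) (simp_all add: norm_cinner_le)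
  also have "\<dots> = L2_set (\<lambda>k. norm (T k y)) UNIV * norm x"
    by (simp add: L2_set_left_distrib)
  also have "\<dots> \<le> tuple_norm T * norm y * norm x"
    using L2_set_norm_le_tuple_norm[OF assms, of y] by (simp add: mult_right_mono)
  finally show ?thesis
    by (simp add: mult_ac)
qed

lemma cinner_block_op:
  "cinner (block_op X Y Z W (x\<^sub>1, x\<^sub>2)) (x\<^sub>1, x\<^sub>2)
     = cinner (X x\<^sub>1) x\<^sub>1 + cinner (Y x\<^sub>2) x\<^sub>1 + cinner (Z x\<^sub>1) x\<^sub>2 + cinner (W x\<^sub>2) x\<^sub>2"
  by (simp add: block_op_def cinner_prod_def cinner_add_left)

lemma L2_set_cinner_block_tuple_le:
  fixes X Y Z W :: "'d::finite \<Rightarrow> 'a::complex_hilbert \<Rightarrow> 'a"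
  assumes X: "\<forall>k. bounded_op (X k)" and Y: "\<forall>k. bounded_op (Y k)"
    and Z: "\<forall>k. bounded_op (Z k)" and W: "\<forall>k. bounded_op (W k)"
  shows "L2_set (\<lambda>k. cmod (cinner (block_tuple X Y Z W k (x\<^sub>1, x\<^sub>2)) (x\<^sub>1, x\<^sub>2))) UNIV
    \<le> euclid_radius X * (norm x\<^sub>1)\<^sup>2 + (tuple_norm Y + tuple_norm Z) * (norm x\<^sub>1 * norm x\<^sub>2)
       + euclid_radius W * (norm x\<^sub>2)\<^sup>2"
proof -
  let ?L = "\<lambda>f. L2_set (\<lambda>k. cmod (f k)) UNIV"
  have "L2_set (\<lambda>k. cmod (cinner (block_tuple X Y Z W k (x\<^sub>1, x\<^sub>2)) (x\<^sub>1, x\<^sub>2))) UNIV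
      = ?L (\<lambda>k. cinner (X k x\<^sub>1) x\<^sub>1 + cinner (Y k x\<^sub>2) x\<^sub>1 + cinner (Z k x\<^sub>1) x\<^sub>2 + cinner (W k x\<^sub>2) x\<^sub>2)"
    by (simp add: block_tuple_def cinner_block_op)
  also have "\<dots> \<le> ?L (\<lambda>k. cinner (X k x\<^sub>1) x\<^sub>1) + ?L (\<lambda>k. cinner (Y k x\<^sub>2) x\<^sub>1)
      + ?L (\<lambda>k. cinner (Z k x\<^sub>1) x\<^sub>2) + ?L (\<lambda>k. cinner (W k x\<^sub>2) x\<^sub>2)"
    using L2_set_norm_add_le[of "\<lambda>k. cinner (X k x\<^sub>1) x\<^sub>1 + cinner (Y k x\<^sub>2) x\<^sub>1 + cinner (Z k x\<^sub>1) x\<^sub>2"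
        "\<lambda>k. cinner (W k x\<^sub>2) x\<^sub>2" UNIV]
      L2_set_norm_add_le[of "\<lambda>k. cinner (X k x\<^sub>1) x\<^sub>1 + cinner (Y k x\<^sub>2) x\<^sub>1"
        "\<lambda>k. cinner (Z k x\<^sub>1) x\<^sub>2" UNIV]
      L2_set_norm_add_le[of "\<lambda>k. cinner (X k x\<^sub>1) x\<^sub>1" "\<lambda>k. cinner (Y k x\<^sub>2) x\<^sub>1" UNIV]
    by linarith
  also have "\<dots> \<le> euclid_radius X * (norm x\<^sub>1)\<^sup>2 + (tuple_norm Y + tuple_norm Z) * (norm x\<^sub>1 * norm x\<^sub>2)
       + euclid_radius W * (norm x\<^sub>2)\<^sup>2"
    using L2_set_cinner_le_euclid_radius[OF X, of x\<^sub>1] L2_set_cinner_le_tuple_norm[OF Y, of x\<^sub>2 x\<^sub>1]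
      L2_set_cinner_le_tuple_norm[OF Z, of x\<^sub>1 x\<^sub>2] L2_set_cinner_le_euclid_radius[OF W, of x\<^sub>2]
    by (simp add: algebra_simps)
  finally show ?thesis .
qed

lemma quadratic_form_mat2:
  "(\<Sum>i\<in>UNIV. cnj (v $ i) * ((mat2 a b c d *v v) $ i))
     = cnj (v $ 1) * (a * v $ 1 + b * v $ 2) + cnj (v $ 2) * (c * v $ 1 + d * v $ 2)"
  by (simp add: sum_2 matrix_vector_mult_def mat2_def)

lemma bdd_above_num_radius_set_mat2:
  "bdd_above {cmod (\<Sum>i\<in>UNIV. cnj (v $ i) * ((mat2 a b c d *v v) $ i)) | v :: complex^2. norm v = 1}"
proof (rule bdd_aboveI, safe)
  fix v :: "complex^2"
  assume "norm v = 1"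
  then have unit: "cmod (v $ 1) \<le> 1" "cmod (v $ 2) \<le> 1"
    using Finite_Cartesian_Product.norm_nth_le[of v] by auto
  have "cmod (cnj (v $ 1) * (a * v $ 1 + b * v $ 2) + cnj (v $ 2) * (c * v $ 1 + d * v $ 2))
      \<le> cmod (v $ 1) * (cmod a * cmod (v $ 1) + cmod b * cmod (v $ 2))
        + cmod (v $ 2) * (cmod c * cmod (v $ 1) + cmod d * cmod (v $ 2))"
    by (smt (verit) norm_mult norm_triangle_ineq complex_mod_cnj mult_left_mono norm_ge_zero)
  also have "\<dots> \<le> 1 * (cmod a * 1 + cmod b * 1) + 1 * (cmod c * 1 + cmod d * 1)"
    using unit by (intro add_mono mult_mono) auto
  finally show "cmod (\<Sum>i\<in>UNIV. cnj (v $ i) * ((mat2 a b c d *v v) $ i))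
      \<le> cmod a + cmod b + cmod c + cmod d"
    by (simp add: quadratic_form_mat2)
qed

lemma real_quadratic_form_le_num_radius_mat2:
  fixes a b c d t\<^sub>1 t\<^sub>2 :: real
  assumes "t\<^sub>1\<^sup>2 + t\<^sub>2\<^sup>2 = 1"
  shows "a * t\<^sub>1\<^sup>2 + (b + c) * (t\<^sub>1 * t\<^sub>2) + d * t\<^sub>2\<^sup>2 \<le> num_radius (mat2 a b c d)"
proof -
  define v :: "complex^2" where "v = (\<chi> i. if i = 1 then of_real t\<^sub>1 else of_real t\<^sub>2)"
  have v: "v $ 1 = of_real t\<^sub>1" "v $ 2 = of_real t\<^sub>2"
    by (simp_all add: v_def)
  have "norm v = 1"
    using assms by (simp add: norm_vec_def L2_set_def sum_2 v)
  moreover have "(\<Sum>i\<in>UNIV. cnj (v $ i) * ((mat2 a b c d *v v) $ i))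
      = of_real (a * t\<^sub>1\<^sup>2 + (b + c) * (t\<^sub>1 * t\<^sub>2) + d * t\<^sub>2\<^sup>2)"
    unfolding quadratic_form_mat2 v by (simp add: power2_eq_square algebra_simps)
  ultimately have "\<bar>a * t\<^sub>1\<^sup>2 + (b + c) * (t\<^sub>1 * t\<^sub>2) + d * t\<^sub>2\<^sup>2\<bar>
      \<in> {cmod (\<Sum>i\<in>UNIV. cnj (w $ i) * ((mat2 a b c d *v w) $ i)) | w :: complex^2. norm w = 1}"
    by (metis (mono_tags, lifting) mem_Collect_eq norm_of_real)
  then have "\<bar>a * t\<^sub>1\<^sup>2 + (b + c) * (t\<^sub>1 * t\<^sub>2) + d * t\<^sub>2\<^sup>2\<bar> \<le> num_radius (mat2 a b c d)"
    unfolding num_radius_def by (rule cSup_upper[OF _ bdd_above_num_radius_set_mat2])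
  then show ?thesis
    by linarith
qed

theorem theorem3p2:
  fixes X Y Z W :: "'d::finite \<Rightarrow> 'a::complex_hilbert \<Rightarrow> 'a"
  assumes "\<forall>k. bounded_op (X k)" and "\<forall>k. bounded_op (Y k)"
    and "\<forall>k. bounded_op (Z k)" and "\<forall>k. bounded_op (W k)"
  shows "euclid_radius (block_tuple X Y Z W)
           \<le> num_radius (mat2 (complex_of_real (euclid_radius X)) (complex_of_real (tuple_norm Y))
                              (complex_of_real (tuple_norm Z)) (complex_of_real (euclid_radius W)))"
proof (rule euclid_radius_le)
  note quadratic_form_le = real_quadratic_form_le_num_radius_mat2
    [of _ _ "euclid_radius X" "tuple_norm Y" "tuple_norm Z" "euclid_radius W"]
  show "0 \<le> num_radius (mat2 (euclid_radius X) (tuple_norm Y) (tuple_norm Z) (euclid_radius W))"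
    using quadratic_form_le[of 1 0] euclid_radius_nonneg[OF assms(1)] by simp
  fix p :: "'a \<times> 'a"
  assume "norm p = 1"
  moreover obtain x\<^sub>1 x\<^sub>2 where p: "p = (x\<^sub>1, x\<^sub>2)"
    by fastforce
  ultimately have "(norm x\<^sub>1)\<^sup>2 + (norm x\<^sub>2)\<^sup>2 = 1"
    by (simp add: norm_prod_def)
  then show "L2_set (\<lambda>k. cmod (cinner (block_tuple X Y Z W k p) p)) UNIV
      \<le> num_radius (mat2 (euclid_radius X) (tuple_norm Y) (tuple_norm Z) (euclid_radius W))"
    unfolding p using L2_set_cinner_block_tuple_le[OF assms, of x\<^sub>1 x\<^sub>2] quadratic_form_le
    by (meson order_trans)
qed

end
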